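(* Let $T\colon X\to X$ be a Borel measurable map of a compact metric space, let $\lambda$ be an exact non-singular Borel probability measure on $X$, and suppose $\mu\ll\lambda$ is an infinite, $\sigma$-finite, $T$-invariant measure. Then $\lambda$ is not full.
   Context: $\lambda$ is non-singular if $\lambda(A)=0$ iff $\lambda(T^{-1}A)=0$; exact if the tail $\sigma$-algebra $\bigcap_n T^{-n}\mathcal B$ is trivial mod $\lambda$. $\lambda$ is full if $\lambda(A)>0$ implies $\lim_{n\to\infty}\lambda(T^n(A))=1$ (measuring images with the completion of $\lambda$). $\mu$ is $T$-invariant if $\mu(T^{-1}A)=\mu(A)$ for all Borel $A$. *)

theory Defs
  imports "HOL-Probability.Probability"
begin

text \<open>Standing setting: X is the whole space of a type of class metric_space
  that is compact; measures live on the Borel sigma-algebra.\<close>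

definition nonsingular :: "('a \<Rightarrow> 'a) \<Rightarrow> 'a measure \<Rightarrow> bool" where
  "nonsingular T L \<longleftrightarrow>
     (\<forall>A \<in> sets L. emeasure L A = 0 \<longleftrightarrow> emeasure L (T -` A \<inter> space L) = 0)"

definition tail_sets :: "('a \<Rightarrow> 'a) \<Rightarrow> 'a measure \<Rightarrow> 'a set set" where
  "tail_sets T L = (\<Inter>n. {(T ^^ n) -` B \<inter> space L | B. B \<in> sets L})"

definition exact :: "('a \<Rightarrow> 'a) \<Rightarrow> 'a measure \<Rightarrow> bool" where
  "exact T L \<longleftrightarrow>
     (\<forall>A \<in> tail_sets T L. emeasure L A = 0 \<or> emeasure L (space L - A) = 0)"

definition full :: "('a \<Rightarrow> 'a) \<Rightarrow> 'a measure \<Rightarrow> bool" where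
  "full T L \<longleftrightarrow>
     (\<forall>A \<in> sets L. emeasure L A > 0 \<longrightarrow>
        (\<lambda>n. emeasure (completion L) ((T ^^ n) ` A)) \<longlonglongrightarrow> 1)"

definition invariant_measure :: "('a \<Rightarrow> 'a) \<Rightarrow> 'a measure \<Rightarrow> bool" where
  "invariant_measure T M \<longleftrightarrow>
     (\<forall>A \<in> sets M. emeasure M (T -` A \<inter> space M) = emeasure M A)"

end

theory Submission
  imports Defs
begin

text \<open>
  Suppose \<open>L\<close> were full.  Since \<open>M \<ll> L\<close> and \<open>M\<close> is infinite, exactness of \<open>L\<close>
  implies that every tail set has \<open>M\<close>-measure \<open>0\<close> or \<open>\<infinity>\<close>.  Fix \<open>B\<close> with \<open>0 < M B < \<infinity>\<close> and let
  \<open>g n\<close> be the conditional expectation of the indicator of \<open>B\<close> given the \<open>\<sigma>\<close>-algebra \<open>T^{-n} \<B>\<close>.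
  This is a reverse martingale: its squared \<open>L\<^sup>2\<close> norms decrease, so a fast subsequence
  \<open>g (ns k)\<close> has summable increments and is dominated by its \<open>liminf h\<close> plus a small tail sum.
  The function \<open>h\<close> is tail measurable with finite integral, so the tail dichotomy gives \<open>h = 0\<close>
  almost everywhere.  As \<open>M(B \<inter> T^{-n} B)\<close> is the integral of \<open>g n\<close> over \<open>T^{-n} B\<close>, the
  return sets of \<open>B\<close> become arbitrarily small at arbitrarily late times.  Choosing times \<open>n_k \<rightarrow> \<infinity>\<close>
  whose return sets have total measure \<open>< M B\<close>, the points of \<open>B\<close> never returning at these times
  form a set \<open>A\<close> of positive measure with \<open>T^{n_k} A\<close> disjoint from \<open>B\<close>.  Fullness then forces
  \<open>L(X - B) = 1\<close>, i.e. \<open>L B = 0\<close>, contradicting \<open>M B > 0\<close>.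
\<close>

lemma ennreal_add_le_plus: "0 \<le> v \<Longrightarrow> ennreal (u + v) \<le> ennreal u + ennreal (v::real)"
proof (cases "0 \<le> u")
  case False
  then have "ennreal (u + v) \<le> ennreal v" by (intro ennreal_leI) simp
  then show ?thesis using False by (simp add: ennreal_neg)
qed simp

text \<open>Elementary inequality used to bound \<open>\<integral>_E |f|\<close> by \<open>c M(E) + c^{-1} \<integral> f\<^sup>2\<close>.\<close>
lemma le_add_square_div: "0 < c \<Longrightarrow> (x::real) \<le> c + x\<^sup>2 / c"
proof -
  assume c: "0 < c"
  have "x * c \<le> c * c + x\<^sup>2"
  proof -
    have "0 \<le> (x - c/2)\<^sup>2 + 3 * (c/2)\<^sup>2" by simp
    then show ?thesis by (simp add: power2_eq_square algebra_simps)
  qed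
  then have "x \<le> (c * c + x\<^sup>2) / c" using c by (simp add: pos_le_divide_eq)
  also have "\<dots> = c + x\<^sup>2 / c" using c by (simp add: field_simps)
  finally show ?thesis .
qed

text \<open>The error budget \<open>c/4 + c/8 + \<dots> = c/2\<close> used when choosing return times.\<close>
lemma suminf_quarter_geometric: "(\<Sum>k. c * (1/2::real)^(k+2)) = c / 2"
proof -
  have "(\<Sum>k. c * (1/2::real)^(k+2)) = (c / 4) * (\<Sum>k. (1/2::real)^k)"
    by (subst suminf_mult[symmetric]) (auto intro: summable_geometric simp: power_add)
  also have "(\<Sum>k. (1/2::real)^k) = 2" using suminf_geometric[of "1/2::real"] by simp
  finally show ?thesis by simp
qed

locale tail_dichotomic_system =
  fixes M :: "'a measure" and T :: "'a \<Rightarrow> 'a"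
  assumes sigma_finite: "sigma_finite_measure M"
    and space_M: "space M = UNIV"
    and T_meas: "T \<in> M \<rightarrow>\<^sub>M M"
    and invariant: "\<And>A. A \<in> sets M \<Longrightarrow> emeasure M (T -` A) = emeasure M A"
    and tail_dichotomy: "\<And>A. (\<forall>n. \<exists>C\<in>sets M. A = (T^^n) -` C) \<Longrightarrow>
                              emeasure M A = 0 \<or> emeasure M A = \<infinity>"
begin

definition preimage_algebra :: "nat \<Rightarrow> 'a measure" where
  "preimage_algebra n = vimage_algebra UNIV (T^^n) M"

lemma funpow_T_meas[measurable]: "(T^^n) \<in> M \<rightarrow>\<^sub>M M"
  using T_meas by (rule measurable_compose_n)

lemma preimage_sets: "A \<in> sets M \<Longrightarrow> (T^^n) -` A \<in> sets M"
  using measurable_sets[OF funpow_T_meas] by (simp add: space_M)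

lemma sets_preimage_algebra: "sets (preimage_algebra n) = {(T^^n) -` A | A. A \<in> sets M}"
  unfolding preimage_algebra_def by (subst sets_vimage_algebra2) (auto simp: space_M)

lemma space_preimage_algebra[simp]: "space (preimage_algebra n) = UNIV"
  unfolding preimage_algebra_def by simp

lemma invariant_funpow: "A \<in> sets M \<Longrightarrow> emeasure M ((T^^n) -` A) = emeasure M A"
proof (induction n)
  case (Suc n)
  have "(T^^Suc n) -` A = T -` ((T^^n) -` A)"
    by (simp only: funpow_Suc_right vimage_comp)
  then show ?case
    by (simp only: invariant[OF preimage_sets[OF Suc.prems]] Suc.IH[OF Suc.prems])
qed simp

lemma subalgebra_preimage: "subalgebra M (preimage_algebra n)"
  unfolding subalgebra_def using sets_preimage_algebra preimage_sets by (auto simp: space_M)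

lemma subalgebra_preimage_nested:
  assumes "m \<le> n" shows "subalgebra (preimage_algebra m) (preimage_algebra n)"
proof -
  obtain k where n: "n = k + m" using assms by (metis le_add_diff_inverse2)
  have "(T^^n) -` A = (T^^m) -` ((T^^k) -` A)" for A
    by (simp add: n funpow_add vimage_comp)
  then show ?thesis
    unfolding subalgebra_def sets_preimage_algebra using preimage_sets by (auto; blast)
qed

text \<open>By invariance, \<open>M\<close> restricted to \<open>T^{-n} \<B>\<close> is still \<open>\<sigma>\<close>-finite, so conditional expectations
  with respect to \<open>T^{-n} \<B>\<close> exist.\<close>
lemma sigma_finite_preimage: "sigma_finite_subalgebra M (preimage_algebra n)"
  unfolding sigma_finite_subalgebra_def
proof (intro conjI subalgebra_preimage)
  obtain A where A: "countable A" "A \<subseteq> sets M" "\<Union>A = space M" "\<forall>a\<in>A. emeasure M a \<noteq> \<infinity>"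
    using sigma_finite_measure.sigma_finite_countable[OF sigma_finite] by blast
  let ?R = "restr_to_subalg M (preimage_algebra n)"
  let ?A = "(\<lambda>a. (T^^n) -` a) ` A"
  have "countable ?A" using A by simp
  moreover have "?A \<subseteq> sets ?R"
    using A by (auto simp: sets_restr_to_subalg[OF subalgebra_preimage] sets_preimage_algebra)
  moreover have "\<Union>?A = space ?R"
    using A(3) by (auto simp: space_restr_to_subalg space_M)
  moreover have "\<forall>b\<in>?A. emeasure ?R b \<noteq> \<infinity>"
  proof
    fix b assume "b \<in> ?A"
    then obtain a where a: "a \<in> A" "b = (T^^n) -` a" by auto
    then have "b \<in> sets (preimage_algebra n)" using A(2) by (auto simp: sets_preimage_algebra)
    then have "emeasure ?R b = emeasure M a"
      using a A(2) by (auto simp: emeasure_restr_to_subalg[OF subalgebra_preimage] invariant_funpow)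
    then show "emeasure ?R b \<noteq> \<infinity>" using a A(4) by auto
  qed
  ultimately show "sigma_finite_measure ?R"
    unfolding sigma_finite_measure_def by blast
qed

end

locale tail_dichotomic_returns = tail_dichotomic_system +
  fixes B assumes B_sets[measurable]: "B \<in> sets M" and B_finite: "emeasure M B < \<infinity>"
begin

definition g :: "nat \<Rightarrow> 'a \<Rightarrow> real" where
  "g n = real_cond_exp M (preimage_algebra n) (indicator B)"

lemma integrable_B[simp]: "integrable M (indicator B :: 'a \<Rightarrow> real)"
  using B_sets B_finite by simp

lemma g_meas_preimage[measurable]: "g n \<in> borel_measurable (preimage_algebra n)"
  unfolding g_def by simp

lemma g_meas[measurable]: "g n \<in> borel_measurable M"
  unfolding g_def by simp

lemma g_integrable: "integrable M (g n)"
proof -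
  interpret sigma_finite_subalgebra M "preimage_algebra n" by (rule sigma_finite_preimage)
  show ?thesis unfolding g_def by (rule real_cond_exp_int(1)) simp
qed

lemma g_range: "AE x in M. 0 \<le> g n x \<and> g n x \<le> 1"
proof -
  interpret sigma_finite_subalgebra M "preimage_algebra n" by (rule sigma_finite_preimage)
  have "AE x in M. 0 \<le> g n x" unfolding g_def by (rule real_cond_exp_pos) auto
  moreover have "AE x in M. g n x \<le> 1" unfolding g_def by (rule real_cond_exp_le_c) auto
  ultimately show ?thesis by auto
qed

lemma g_nested: "n \<le> m \<Longrightarrow> AE x in M. real_cond_exp M (preimage_algebra m) (g n) x = g m x"
proof -
  assume "n \<le> m"
  interpret sigma_finite_subalgebra M "preimage_algebra m" by (rule sigma_finite_preimage)
  show ?thesis unfolding g_def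
    by (rule real_cond_exp_nested_subalg[OF subalgebra_preimage
          subalgebra_preimage_nested[OF \<open>n \<le> m\<close>]]) simp
qed

lemma g_nn_integral: "(\<integral>\<^sup>+x. ennreal (g n x) \<partial>M) = emeasure M B"
proof -
  interpret sigma_finite_subalgebra M "preimage_algebra n" by (rule sigma_finite_preimage)
  have "(\<integral>\<^sup>+x. ennreal (g n x) \<partial>M) = ennreal (\<integral>x. g n x \<partial>M)"
    using g_range[of n] by (intro nn_integral_eq_integral g_integrable) auto
  also have "(\<integral>x. g n x \<partial>M) = (\<integral>x. indicator B x \<partial>M)"
    unfolding g_def by (rule real_cond_exp_int(2)) simp
  finally show ?thesis using B_finite by (simp add: emeasure_eq_ennreal_measure)
qed

lemma g_prod_integrable: "integrable M (\<lambda>x. g n x * g m x)"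
proof (rule Bochner_Integration.integrable_bound[OF g_integrable[of m]])
  show "AE x in M. norm (g n x * g m x) \<le> norm (g m x)"
    using g_range[of n] g_range[of m]
    by eventually_elim (auto simp: abs_mult intro!: mult_left_le_one_le)
qed simp

definition q :: "nat \<Rightarrow> real" where "q n = (\<integral>x. g n x * g n x \<partial>M)"

text \<open>Orthogonality of reverse-martingale increments: \<open>\<integral> (g n - g m)\<^sup>2 = q n - q m\<close> for \<open>n \<le> m\<close>.\<close>
lemma increment_square_integral:
  assumes "n \<le> m" shows "(\<integral>x. (g n x - g m x)\<^sup>2 \<partial>M) = q n - q m"
proof -
  interpret sigma_finite_subalgebra M "preimage_algebra m" by (rule sigma_finite_preimage)
  have cross: "(\<integral>x. g m x * g n x \<partial>M) = q m"
  proof -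
    have "(\<integral>x. g m x * g n x \<partial>M)
        = (\<integral>x. g m x * real_cond_exp M (preimage_algebra m) (g n) x \<partial>M)"
      by (rule real_cond_exp_intg(2)[symmetric]) (auto intro: g_prod_integrable)
    also have "\<dots> = q m"
      unfolding q_def using g_nested[OF assms] by (intro integral_cong_AE) auto
    finally show ?thesis .
  qed
  have "(\<integral>x. (g n x - g m x)\<^sup>2 \<partial>M) =
      (\<integral>x. g n x * g n x - 2 * (g m x * g n x) + g m x * g m x \<partial>M)"
    by (intro Bochner_Integration.integral_cong) (auto simp: power2_eq_square algebra_simps)
  also have "\<dots> = q n - 2 * (\<integral>x. g m x * g n x \<partial>M) + q m"
    unfolding q_def using g_prod_integrable by simp
  finally show ?thesis using cross by simp
qed

lemma increment_square_integrable: "integrable M (\<lambda>x. (g n x - g m x)\<^sup>2)"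
  using g_prod_integrable by (simp add: power2_eq_square algebra_simps)

lemma q_antimono: "n \<le> m \<Longrightarrow> q m \<le> q n"
  using increment_square_integral[of n m] integral_nonneg_AE[of "\<lambda>x. (g n x - g m x)\<^sup>2" M]
  by auto

text \<open>A decreasing sequence bounded below is Cauchy.\<close>
lemma q_cauchy: "0 < e \<Longrightarrow> \<exists>N. \<forall>n m. N \<le> n \<longrightarrow> n \<le> m \<longrightarrow> q n - q m \<le> e"
proof -
  assume e: "0 < e"
  have bdd: "bdd_below (range q)"
    unfolding q_def by (auto intro!: bdd_belowI[where m=0])
  then obtain N where N: "q N < Inf (range q) + e"
    using cInf_less_iff[of "range q" "Inf (range q) + e"] e by auto
  have "Inf (range q) \<le> q m" for m using bdd by (auto intro: cInf_lower)
  then show ?thesis using N q_antimono by (intro exI[of _ N]) (smt (verit))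
qed

text \<open>A rapidly converging subsequence \<open>ns\<close>: its \<open>k\<close>-th increment has squared \<open>L\<^sup>2\<close> norm \<open>\<le> 8^{-k}\<close>.\<close>
definition cauchy_index :: "nat \<Rightarrow> nat" where
  "cauchy_index k = (SOME N. \<forall>n m. N \<le> n \<longrightarrow> n \<le> m \<longrightarrow> q n - q m \<le> (1/8)^k)"

lemma cauchy_index: "cauchy_index k \<le> n \<Longrightarrow> n \<le> m \<Longrightarrow> q n - q m \<le> (1/8)^k"
proof -
  have "\<exists>N. \<forall>n m. N \<le> n \<longrightarrow> n \<le> m \<longrightarrow> q n - q m \<le> (1/8)^k"
    by (rule q_cauchy) simp
  then have "\<forall>n m. cauchy_index k \<le> n \<longrightarrow> n \<le> m \<longrightarrow> q n - q m \<le> (1/8)^k"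
    unfolding cauchy_index_def by (rule someI_ex)
  then show "cauchy_index k \<le> n \<Longrightarrow> n \<le> m \<Longrightarrow> q n - q m \<le> (1/8)^k" by blast
qed

definition ns :: "nat \<Rightarrow> nat" where "ns k = k + (\<Sum>j\<le>k. cauchy_index j)"

lemma ns_ge: "k \<le> ns k" "cauchy_index k \<le> ns k"
  unfolding ns_def by (auto intro: trans_le_add2 member_le_sum)

lemma ns_Suc: "ns k \<le> ns (Suc k)"
  unfolding ns_def by simp

lemma ns_increment_small: "(\<integral>x. (g (ns k) x - g (ns (Suc k)) x)\<^sup>2 \<partial>M) \<le> (1/8)^k"
  using increment_square_integral[OF ns_Suc] cauchy_index[OF ns_ge(2) ns_Suc] by simp

definition a :: "nat \<Rightarrow> 'a \<Rightarrow> real" where "a k x = \<bar>g (ns (Suc k)) x - g (ns k) x\<bar>"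

definition R :: "nat \<Rightarrow> 'a \<Rightarrow> ennreal" where "R j x = (\<Sum>i. ennreal (a (i + j) x))"

definition h :: "'a \<Rightarrow> ennreal" where "h x = liminf (\<lambda>k. ennreal (g (ns k) x))"

text \<open>Telescoping: each \<open>g (ns j)\<close> is bounded by the \<open>liminf\<close> plus the remaining increments.\<close>
lemma g_le_h_plus_R: "ennreal (g (ns j) x) \<le> h x + R j x"
proof -
  have telescope: "g (ns j) x \<le> g (ns (j + d)) x + (\<Sum>i<d. a (i + j) x)" for d
    by (induction d) (auto simp: a_def add.commute)
  have "ennreal (g (ns j) x) \<le> ennreal (g (ns (d + j)) x) + R j x" for d
  proof -
    have "ennreal (g (ns j) x) \<le> ennreal (g (ns (j + d)) x + (\<Sum>i<d. a (i + j) x))"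
      using telescope by (rule ennreal_leI)
    also have "\<dots> \<le> ennreal (g (ns (j + d)) x) + ennreal (\<Sum>i<d. a (i + j) x)"
      by (rule ennreal_add_le_plus) (simp add: a_def sum_nonneg)
    also have "ennreal (\<Sum>i<d. a (i + j) x) = (\<Sum>i<d. ennreal (a (i + j) x))"
      by (rule sum_ennreal[symmetric]) (simp add: a_def)
    also have "\<dots> \<le> R j x" unfolding R_def by (rule sum_le_suminf) auto
    finally show ?thesis by (simp add: add.commute add_left_mono)
  qed
  then have "ennreal (g (ns j) x) \<le> liminf (\<lambda>d. ennreal (g (ns (d + j)) x) + R j x)"
    by (intro Liminf_bounded) auto
  also have "\<dots> = liminf (\<lambda>d. ennreal (g (ns (d + j)) x)) + R j x"
    by (rule Liminf_add_const) simp
  also have "liminf (\<lambda>d. ennreal (g (ns (d + j)) x)) = h x"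
    unfolding h_def by (rule liminf_shift_k)
  finally show ?thesis .
qed

lemma h_meas_preimage[measurable]: "h \<in> borel_measurable (preimage_algebra m)"
proof -
  have eq: "h = (\<lambda>x. liminf (\<lambda>d. ennreal (g (ns (d + m)) x)))"
    unfolding h_def by (intro ext liminf_shift_k[symmetric])
  have "g (ns (d + m)) \<in> borel_measurable (preimage_algebra m)" for d
    using ns_ge(1)[of "d + m"]
    by (intro measurable_from_subalg[OF subalgebra_preimage_nested g_meas_preimage]) simp
  then show ?thesis unfolding eq by measurable
qed

lemma h_nn_integral: "(\<integral>\<^sup>+x. h x \<partial>M) \<le> emeasure M B"
proof -
  have "(\<integral>\<^sup>+x. h x \<partial>M) \<le> liminf (\<lambda>k. \<integral>\<^sup>+x. ennreal (g (ns k) x) \<partial>M)"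
    unfolding h_def by (rule nn_integral_liminf) simp
  then show ?thesis by (simp add: g_nn_integral Liminf_const)
qed

lemma h_superlevel_sets[measurable]: "{x. c < h x} \<in> sets M"
proof -
  have "h \<in> borel_measurable M"
    by (rule measurable_from_subalg[OF subalgebra_preimage h_meas_preimage[of 0]])
  then have "{x\<in>space M. c < h x} \<in> sets M" by measurable
  then show ?thesis by (simp add: space_M)
qed

text \<open>Superlevel sets of \<open>h\<close> are tail sets of finite measure, hence null.\<close>
lemma h_level_null: "0 < t \<Longrightarrow> emeasure M {x. ennreal t < h x} = 0"
proof -
  assume t: "0 < t"
  let ?S = "{x. ennreal t < h x}"
  have S_preimage: "?S \<in> sets (preimage_algebra m)" for m
  proof -
    have "{x\<in>space (preimage_algebra m). ennreal t < h x} \<in> sets (preimage_algebra m)"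
      by measurable
    then show ?thesis by simp
  qed
  then have "\<forall>n. \<exists>C\<in>sets M. ?S = (T^^n) -` C"
    unfolding sets_preimage_algebra by blast
  then have dichotomy: "emeasure M ?S = 0 \<or> emeasure M ?S = \<infinity>" by (rule tail_dichotomy)
  have "ennreal t * emeasure M ?S = (\<integral>\<^sup>+x. ennreal t * indicator ?S x \<partial>M)"
    by (rule nn_integral_cmult_indicator[symmetric]) simp
  also have "\<dots> \<le> (\<integral>\<^sup>+x. h x \<partial>M)"
    by (intro nn_integral_mono) (auto simp: indicator_def less_imp_le)
  also have "\<dots> < \<infinity>" using h_nn_integral B_finite by (simp add: le_less_trans)
  finally have "emeasure M ?S \<noteq> \<infinity>" using t by (auto simp: ennreal_mult_top)
  then show ?thesis using dichotomy by simp
qed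

lemma h_AE_zero: "AE x in M. h x = 0"
proof -
  have "AE x in M. \<forall>i::nat. x \<notin> {x. ennreal (1 / Suc i) < h x}"
    unfolding AE_all_countable
  proof
    fix i :: nat
    show "AE x in M. x \<notin> {x. ennreal (1 / Suc i) < h x}"
    proof (rule AE_not_in)
      have "0 < 1 / real (Suc i)" by simp
      then show "{x. ennreal (1 / Suc i) < h x} \<in> null_sets M"
        by (intro null_setsI h_level_null h_superlevel_sets)
    qed
  qed
  then show ?thesis
  proof eventually_elim
    case (elim x)
    have "h x \<le> 0"
    proof (rule ennreal_le_epsilon)
      fix e :: real assume e: "0 < e"
      obtain i :: nat where i: "inverse (real (Suc i)) < e"
        using reals_Archimedean[OF e] by auto
      have "h x \<le> ennreal (1 / Suc i)" using elim by (auto simp: not_less)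
      also have "\<dots> \<le> ennreal e" using i by (intro ennreal_leI) (simp add: field_simps)
      finally show "h x \<le> 0 + ennreal e" by simp
    qed
    then show ?case by simp
  qed
qed

lemma return_set_integral: "ennreal (measure M (B \<inter> (T^^n) -` B)) =
    (\<integral>\<^sup>+x. indicator ((T^^n) -` B) x * ennreal (g n x) \<partial>M)"
proof -
  interpret sigma_finite_subalgebra M "preimage_algebra n" by (rule sigma_finite_preimage)
  let ?E = "(T^^n) -` B"
  have E_sets: "?E \<in> sets M" by (rule preimage_sets[OF B_sets])
  have "(\<integral>x\<in>?E. indicator B x \<partial>M) = (\<integral>x\<in>?E. g n x \<partial>M)"
    unfolding g_def by (rule real_cond_exp_intA) (auto simp: sets_preimage_algebra)
  moreover have "(\<integral>x\<in>?E. indicator B x \<partial>M) = measure M (B \<inter> ?E)"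
    unfolding set_lebesgue_integral_def
    by (simp add: indicator_inter_arith[symmetric] space_M Int_commute E_sets)
  moreover have "ennreal (\<integral>x\<in>?E. g n x \<partial>M) = (\<integral>\<^sup>+x. ennreal (indicator ?E x * g n x) \<partial>M)"
    unfolding set_lebesgue_integral_def real_scaleR_def using g_range[of n]
    by (intro nn_integral_eq_integral[symmetric])
       (auto simp: indicator_def intro: integrable_mult_indicator[OF E_sets g_integrable, simplified])
  moreover have "(\<integral>\<^sup>+x. ennreal (indicator ?E x * g n x) \<partial>M) =
      (\<integral>\<^sup>+x. indicator ?E x * ennreal (g n x) \<partial>M)"
    by (intro nn_integral_cong) (simp split: split_indicator)
  ultimately show ?thesis by simp
qed

lemma increment_integrable_on: "E \<in> sets M \<Longrightarrow> integrable M (\<lambda>x. indicator E x * a k x)"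
  unfolding a_def
  using integrable_mult_indicator[OF _ integrable_abs[OF Bochner_Integration.integrable_diff[OF
          g_integrable g_integrable]]]
  by simp

lemma increment_on_preimage:
  "(\<integral>x. indicator ((T^^n) -` B) x * a k x \<partial>M) \<le> (1/2)^k * (measure M B + 1)"
proof -
  let ?E = "(T^^n) -` B"
  have E_sets[measurable]: "?E \<in> sets M" by (rule preimage_sets[OF B_sets])
  have a_sq: "(a k x)\<^sup>2 = (g (ns k) x - g (ns (Suc k)) x)\<^sup>2" for x
    unfolding a_def by (simp add: power2_abs power2_commute)
  have a_sq_int: "integrable M (\<lambda>x. (a k x)\<^sup>2)"
    unfolding a_sq by (rule increment_square_integrable)
  have a_int: "integrable M (\<lambda>x. indicator ?E x * a k x)"
    using E_sets by (rule increment_integrable_on)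
  have E_finite: "emeasure M ?E < \<infinity>"
    using invariant_funpow[OF B_sets, of n] B_finite by simp
  have pointwise: "indicator ?E x * a k x \<le> (1/2)^k * indicator ?E x + 2^k * (a k x)\<^sup>2" for x
  proof -
    have "a k x \<le> (1/2)^k + (a k x)\<^sup>2 / (1/2)^k" by (rule le_add_square_div) simp
    also have "(a k x)\<^sup>2 / (1/2)^k = 2^k * (a k x)\<^sup>2" by (simp add: field_simps)
    finally show ?thesis by (simp add: a_def split: split_indicator)
  qed
  have "(\<integral>x. indicator ?E x * a k x \<partial>M) \<le> (\<integral>x. (1/2)^k * indicator ?E x + 2^k * (a k x)\<^sup>2 \<partial>M)"
    using a_int a_sq_int E_finite pointwise by (intro integral_mono) auto
  also have "\<dots> = (1/2)^k * measure M ?E + 2^k * (\<integral>x. (a k x)\<^sup>2 \<partial>M)"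
    using a_sq_int E_finite by simp
  also have "measure M ?E = measure M B"
    using invariant_funpow[OF B_sets, of n] by (simp add: measure_def)
  also have "(2::real)^k * (\<integral>x. (a k x)\<^sup>2 \<partial>M) \<le> 2^k * (1/8)^k"
    unfolding a_sq by (intro mult_left_mono ns_increment_small) auto
  also have "(2::real)^k * (1/8)^k = (1/4)^k"
    by (simp add: power_mult_distrib[symmetric])
  also have "(1/4::real)^k \<le> (1/2)^k"
    by (intro power_mono) auto
  finally show ?thesis by (simp add: algebra_simps)
qed

text \<open>Since \<open>g (ns j) \<le> R j\<close> almost everywhere, the returns of \<open>B\<close> at times \<open>ns j\<close> are small.\<close>
lemma return_bound:
  "ennreal (measure M (B \<inter> (T^^ns j) -` B)) \<le> ennreal (2 * (1/2)^j * (measure M B + 1))"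
proof -
  let ?E = "(T^^ns j) -` B"
  have E_sets[measurable]: "?E \<in> sets M" by (rule preimage_sets[OF B_sets])
  have term_bound: "(\<integral>\<^sup>+x. indicator ?E x * ennreal (a k x) \<partial>M) \<le> ennreal ((1/2)^k * (measure M B + 1))"
    for k
  proof -
    have a_int: "integrable M (\<lambda>x. indicator ?E x * a k x)"
      using E_sets by (rule increment_integrable_on)
    have "(\<integral>\<^sup>+x. indicator ?E x * ennreal (a k x) \<partial>M) = (\<integral>\<^sup>+x. ennreal (indicator ?E x * a k x) \<partial>M)"
      by (intro nn_integral_cong) (simp split: split_indicator)
    also have "\<dots> = ennreal (\<integral>x. indicator ?E x * a k x \<partial>M)"
      using a_int by (intro nn_integral_eq_integral) (auto simp: a_def)
    finally show ?thesis using increment_on_preimage by (simp add: ennreal_leI)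
  qed
  have "AE x in M. ennreal (g (ns j) x) \<le> R j x"
    using h_AE_zero by eventually_elim (metis g_le_h_plus_R add_0)
  then have "ennreal (measure M (B \<inter> ?E)) \<le> (\<integral>\<^sup>+x. indicator ?E x * R j x \<partial>M)"
    unfolding return_set_integral
    by (intro nn_integral_mono_AE) (auto elim!: eventually_mono intro: mult_left_mono)
  also have "\<dots> = (\<Sum>i. \<integral>\<^sup>+x. indicator ?E x * ennreal (a (i + j) x) \<partial>M)"
    unfolding R_def by (subst nn_integral_suminf[symmetric]) (simp_all add: a_def)
  also have "\<dots> \<le> (\<Sum>i. ennreal ((1/2)^(i + j) * (measure M B + 1)))"
    by (intro suminf_le term_bound) auto
  also have "\<dots> = ennreal (\<Sum>i. (1/2)^(i + j) * (measure M B + 1))"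
    by (rule suminf_ennreal2) (auto simp: power_add summable_geometric summable_mult2)
  also have "(\<Sum>i. (1/2::real)^(i + j) * (measure M B + 1)) = 2 * (1/2)^j * (measure M B + 1)"
  proof -
    have "(\<Sum>i. (1/2::real)^(i + j) * (measure M B + 1))
        = (\<Sum>i. (1/2)^i * ((1/2)^j * (measure M B + 1)))"
      by (simp add: power_add mult_ac)
    also have "\<dots> = (\<Sum>i. (1/2::real)^i) * ((1/2)^j * (measure M B + 1))"
      by (rule suminf_mult2[symmetric]) (simp add: summable_geometric)
    also have "(\<Sum>i. (1/2::real)^i) = 2"
      using suminf_geometric[of "1/2::real"] by simp
    finally show ?thesis by (simp add: mult_ac)
  qed
  finally show ?thesis .
qed

lemma small_late_return: "0 < e \<Longrightarrow> \<exists>n\<ge>N. emeasure M (B \<inter> (T^^n) -` B) < ennreal e"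
proof -
  assume e: "0 < e"
  have "(\<lambda>j. 2 * (1/2::real)^j * (measure M B + 1)) \<longlonglongrightarrow> 2 * 0 * (measure M B + 1)"
    by (intro tendsto_intros) simp
  then have "\<forall>\<^sub>F j in sequentially. 2 * (1/2::real)^j * (measure M B + 1) < e \<and> N \<le> j"
    using e by (intro eventually_conj order_tendstoD(2) eventually_ge_at_top) auto
  then obtain j where j: "N \<le> j" "2 * (1/2::real)^j * (measure M B + 1) < e"
    unfolding eventually_sequentially by (meson order_refl)
  have "emeasure M (B \<inter> (T^^ns j) -` B) \<le> emeasure M B"
    by (intro emeasure_mono) auto
  then have "emeasure M (B \<inter> (T^^ns j) -` B) = ennreal (measure M (B \<inter> (T^^ns j) -` B))"
    using B_finite by (intro emeasure_eq_ennreal_measure) (auto simp: top_unique)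
  also have "\<dots> \<le> ennreal (2 * (1/2)^j * (measure M B + 1))" by (rule return_bound)
  also have "\<dots> < ennreal e" using j e by (intro ennreal_lessI) auto
  finally show ?thesis using j ns_ge(1)[of j] by (intro exI[of _ "ns j"]) auto
qed

end

context tail_dichotomic_system
begin

lemma small_late_returns:
  assumes "B \<in> sets M" "emeasure M B < \<infinity>" "0 < e"
  shows "\<exists>n\<ge>N. emeasure M (B \<inter> (T^^n) -` B) < ennreal e"
proof -
  interpret tail_dichotomic_returns M T B using assms(1,2) by unfold_locales
  show ?thesis using assms(3) by (rule small_late_return)
qed

text \<open>Choosing late return times whose return sets have summable measure \<open>< M B\<close>, the points of
  \<open>B\<close> that never return at those times form a subset of positive measure.\<close>
lemma nonreturning_subset:
  assumes B: "B \<in> sets M" "0 < emeasure M B" "emeasure M B < \<infinity>"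
  obtains A nn where "A \<in> sets M" "0 < emeasure M A"
    "filterlim nn at_top sequentially" "\<And>k. (T^^nn k) ` A \<inter> B = {}"
proof -
  define mB where "mB = measure M B"
  have eB: "emeasure M B = ennreal mB"
    using B(3) unfolding mB_def by (intro emeasure_eq_ennreal_measure) auto
  have mB_pos: "0 < mB" using B(2) eB by (cases "mB > 0") (auto simp: ennreal_neg)
  define nn where "nn k = (SOME n. n \<ge> k \<and> emeasure M (B \<inter> (T^^n) -` B) < ennreal (mB * (1/2)^(k+2)))"
    for k
  have nn: "nn k \<ge> k \<and> emeasure M (B \<inter> (T^^nn k) -` B) < ennreal (mB * (1/2)^(k+2))" for k
    unfolding nn_def
    by (rule someI_ex) (use small_late_returns[OF B(1,3), of "mB * (1/2)^(k+2)" k] mB_pos in auto)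
  define A where "A = B - (\<Union>k. (T^^nn k) -` B)"
  have A_sets: "A \<in> sets M" unfolding A_def using B by (auto intro!: preimage_sets)
  have returns_sets: "range (\<lambda>k. B \<inter> (T^^nn k) -` B) \<subseteq> sets M"
    using B by (auto intro!: preimage_sets)
  have "emeasure M B \<le> emeasure M (A \<union> (\<Union>k. B \<inter> (T^^nn k) -` B))"
    using A_sets B(1) by (intro emeasure_mono) (auto simp: A_def intro!: preimage_sets)
  also have "\<dots> \<le> emeasure M A + emeasure M (\<Union>k. B \<inter> (T^^nn k) -` B)"
    using A_sets B(1) by (intro emeasure_subadditive) (auto intro!: preimage_sets)
  also have "emeasure M (\<Union>k. B \<inter> (T^^nn k) -` B) \<le> (\<Sum>k. emeasure M (B \<inter> (T^^nn k) -` B))"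
    using returns_sets by (intro emeasure_subadditive_countably) auto
  also have "\<dots> \<le> (\<Sum>k. ennreal (mB * (1/2)^(k+2)))"
    using nn by (intro suminf_le) (auto intro: less_imp_le)
  also have "\<dots> = ennreal (\<Sum>k. mB * (1/2)^(k+2))"
    using mB_pos
    by (intro suminf_ennreal2) (auto intro!: summable_mult summable_geometric simp: power_add)
  also have "(\<Sum>k. mB * (1/2::real)^(k+2)) = mB / 2"
    by (rule suminf_quarter_geometric)
  finally have "ennreal mB \<le> emeasure M A + ennreal (mB / 2)"
    unfolding eB by (simp add: add_left_mono)
  moreover have "\<not> ennreal mB \<le> ennreal (mB / 2)" using mB_pos by simp
  ultimately have "emeasure M A \<noteq> 0" by auto
  moreover have "filterlim nn at_top sequentially"
    by (rule filterlim_at_top_mono[OF filterlim_ident]) (use nn in auto)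
  moreover have "(T^^nn k) ` A \<inter> B = {}" for k unfolding A_def by auto
  ultimately show ?thesis
    using that[of A nn] A_sets by (auto simp: A_def zero_less_iff_neq_zero)
qed

end

text \<open>Exactness of \<open>L\<close> passes to any infinite measure \<open>M \<ll> L\<close>: a tail set is \<open>L\<close>-null or
  \<open>L\<close>-conull, hence \<open>M\<close>-null or of infinite \<open>M\<close>-measure.\<close>
lemma exact_tail_dichotomy:
  assumes "exact T L" "sets L = sets M" "space M = UNIV"
    and "absolutely_continuous L M" "emeasure M (space M) = \<infinity>"
    and tail: "\<forall>n. \<exists>C\<in>sets M. A = (T^^n) -` C"
  shows "emeasure M A = 0 \<or> emeasure M A = \<infinity>"
proof -
  have space_L: "space L = UNIV" using sets_eq_imp_space_eq[OF assms(2)] assms(3) by simp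
  have null_transfer: "emeasure M S = 0" if "S \<in> sets M" "emeasure L S = 0" for S
    using absolutely_continuousD[OF assms(4) _ that(2)] that(1) assms(2) by simp
  have A_sets: "A \<in> sets M" using tail[rule_format, of 0] by auto
  have "A \<in> tail_sets T L"
    unfolding tail_sets_def using tail by (auto simp: space_L assms(2)) blast
  then have "emeasure L A = 0 \<or> emeasure L (UNIV - A) = 0"
    using assms(1) unfolding exact_def by (simp add: space_L)
  then show ?thesis
  proof
    assume "emeasure L (UNIV - A) = 0"
    moreover have co_sets: "UNIV - A \<in> sets M"
      using sets.compl_sets[OF A_sets] by (simp add: assms(3))
    ultimately have "emeasure M (UNIV - A) = 0" by (rule null_transfer[rotated])
    moreover have "emeasure M A + emeasure M (UNIV - A) = emeasure M UNIV"
      using plus_emeasure[OF A_sets co_sets] by simp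
    ultimately show ?thesis using assms(3,5) by simp
  next
    assume "emeasure L A = 0"
    then show ?thesis using null_transfer[OF A_sets] by simp
  qed
qed

lemma sigma_finite_positive_finite_set:
  assumes "sigma_finite_measure M" "emeasure M (space M) \<noteq> 0"
  obtains B where "B \<in> sets M" "0 < emeasure M B" "emeasure M B < \<infinity>"
proof -
  obtain AA where AA: "countable AA" "AA \<subseteq> sets M" "\<Union>AA = space M"
      "\<forall>a\<in>AA. emeasure M a \<noteq> \<infinity>"
    using sigma_finite_measure.sigma_finite_countable[OF assms(1)] by blast
  have "\<exists>a\<in>AA. emeasure M a \<noteq> 0"
  proof (rule ccontr)
    assume "\<not> ?thesis"
    then have "(\<Union>a\<in>AA. a) \<in> null_sets M" using AA by (intro null_sets_UN') auto
    then show False using AA(3) assms(2) by auto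
  qed
  then show ?thesis using AA that by (auto simp: zero_less_iff_neq_zero less_top)
qed

lemma full_avoided_set_null:
  assumes "prob_space L" "full T L" "space L = UNIV"
    and A: "A \<in> sets L" "0 < emeasure L A"
    and nn: "filterlim nn at_top sequentially"
    and B: "B \<in> sets L" "\<And>k. (T^^nn k) ` A \<inter> B = {}"
  shows "emeasure L B = 0"
proof -
  have "(\<lambda>n. emeasure (completion L) ((T ^^ n) ` A)) \<longlonglongrightarrow> 1"
    using assms(2) A unfolding full_def by auto
  from filterlim_compose[OF this nn]
  have lim: "(\<lambda>k. emeasure (completion L) ((T ^^ nn k) ` A)) \<longlonglongrightarrow> 1"
    by (simp add: o_def)
  have co_sets: "UNIV - B \<in> sets L" using sets.compl_sets[OF B(1)] assms(3) by simp
  have "emeasure (completion L) ((T ^^ nn k) ` A) \<le> emeasure L (UNIV - B)" for k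
  proof -
    have "emeasure (completion L) ((T ^^ nn k) ` A) \<le> emeasure (completion L) (UNIV - B)"
      using B(2)[of k] co_sets by (intro emeasure_mono) (auto intro: sets_completionI_sets)
    also have "\<dots> = emeasure L (UNIV - B)" using co_sets by simp
    finally show ?thesis .
  qed
  with lim have "1 \<le> emeasure L (UNIV - B)" by (intro LIMSEQ_le_const2) auto
  moreover have "emeasure L B + emeasure L (UNIV - B) = 1"
    using plus_emeasure[OF B(1) co_sets] prob_space.emeasure_space_1[OF assms(1)] assms(3)
    by simp
  ultimately have "1 + emeasure L B \<le> 1 + 0"
    using add_left_mono[of 1 "emeasure L (UNIV - B)" "emeasure L B"] by (simp add: add.commute)
  then show ?thesis by (subst (asm) ennreal_add_left_cancel_le) simp
qed

theorem mainTheorem5: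
  fixes T :: "'a::metric_space \<Rightarrow> 'a"
    and L M :: "'a measure"
  assumes "compact (UNIV :: 'a set)"
    and "T \<in> borel \<rightarrow>\<^sub>M borel"
    and "sets L = sets borel"
    and "prob_space L"
    and "nonsingular T L"
    and "exact T L"
    and "sets M = sets borel"
    and "absolutely_continuous L M"
    and "emeasure M (space M) = \<infinity>"
    and "sigma_finite_measure M"
    and "invariant_measure T M"
  shows "\<not> full T L"
proof
  assume full: "full T L"
  have space_L: "space L = UNIV" and space_M: "space M = UNIV"
    using sets_eq_imp_space_eq[OF assms(3)] sets_eq_imp_space_eq[OF assms(7)] by simp_all
  have sets_LM: "sets L = sets M" using assms(3,7) by simp
  interpret tail_dichotomic_system M T
  proof (rule tail_dichotomic_system.intro)
    show "sigma_finite_measure M" by (rule assms(10))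
    show "space M = UNIV" by (rule space_M)
    show "T \<in> M \<rightarrow>\<^sub>M M"
      using assms(2) by (simp add: measurable_cong_sets[OF assms(7) assms(7)])
    show "emeasure M (T -` A) = emeasure M A" if "A \<in> sets M" for A
      using assms(11) that unfolding invariant_measure_def by (simp add: space_M)
    show "emeasure M A = 0 \<or> emeasure M A = \<infinity>" if "\<forall>n. \<exists>C\<in>sets M. A = (T^^n) -` C" for A
      using exact_tail_dichotomy[OF assms(6) sets_LM space_M assms(8,9) that] .
  qed
  have "emeasure M (space M) \<noteq> 0" using assms(9) by simp
  then obtain B where B: "B \<in> sets M" "0 < emeasure M B" "emeasure M B < \<infinity>"
    by (rule sigma_finite_positive_finite_set[OF assms(10)])
  obtain A nn where A: "A \<in> sets M" "0 < emeasure M A" and nn: "filterlim nn at_top sequentially"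
      and avoid: "\<And>k. (T^^nn k) ` A \<inter> B = {}"
    using nonreturning_subset[OF B] by blast
  have null_transfer: "emeasure M S = 0" if "S \<in> sets M" "emeasure L S = 0" for S
    using absolutely_continuousD[OF assms(8) _ that(2)] that(1) sets_LM by simp
  have "0 < emeasure L A" using A null_transfer by (auto simp: zero_less_iff_neq_zero)
  then have "emeasure L B = 0"
    using full_avoided_set_null[OF assms(4) full space_L _ _ nn _ avoid] A(1) B(1) sets_LM by simp
  then show False using null_transfer B by simp
qed

end
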